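(* Let $(X,\mathcal{A},\mu)$ be a probability space, $\theta$ a measure-preserving endomorphism, $\varphi$ a ceiling function, and $(\overline{X},\overline{\mu},(\Phi_t))$ the associated special flow. Let $\overline{A}\subset\overline{X}$ be a hole such that for some $\lambda>0$ the limit \[\alpha:=\lim_{n\to\infty}-\frac{1}{n\lambda}\log\overline{\mu}\big(\{(x,s)\in\overline{X}:\forall\tau\in[0,n\lambda]:\Phi_\tau(x,s)\notin\overline{A}\}\big)\] exists. Then for every sequence $(t_k)_{k\in\mathbb{N}}$ of positive reals with $t_k\to\infty$ the limit \[\lim_{k\to\infty}-\frac{1}{t_k}\log\overline{\mu}\big(\{(x,s)\in\overline{X}:\forall\tau\in[0,t_k]:\Phi_\tau(x,s)\notin\overline{A}\}\big)\] exists and equals $\alpha$. In particular the escape rate $\rho(\overline{A},\varphi)$ exists and equals $\alpha$.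
   Context: A ceiling function is a measurable $\varphi:X\to\mathbb{R}$ with $\inf\varphi>0$. $S_n\varphi=\sum_{k=0}^{n-1}\varphi\circ\theta^k$, $N_t^\varphi(x)=\min\{n\in\mathbb{N}_0:S_n\varphi(x)>t\}$. Special flow: $\overline{X}=\{(x,s):0\le s<\varphi(x)\}$ with $\overline{\mu}$ the restriction of $\mu\otimes$Lebesgue; $\Phi_t(x,s)=(x,s+t)$ if $t<\varphi(x)-s$ and $\Phi_t(x,s)=(\theta^{N-1}x,s+t-S_{N-1}\varphi(x))$ with $N=N^\varphi_{s+t}(x)$ otherwise. A hole is a measurable $\overline{A}\subset\overline{X}$ with $\bigcup_{t\ge0}\Phi_t^{-1}(\overline{A})=\overline{X}$ a.e. and $\bigcup_{t\in[0,\tau]}\Phi_t^{-1}(\overline{A})$ measurable for all $\tau\ge0$. The escape rate $\rho(\overline{A},\varphi)$ is $\lim_{t\to\infty}-\frac1t\log\overline{\mu}(\{(x,s):\forall\tau\in[0,t]:\Phi_\tau(x,s)\notin\overline{A}\})$ when this limit exists (i.e. limsup and liminf coincide). *)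

theory Defs
  imports "HOL-Probability.Probability"
begin

definition measure_preserving :: "'a measure \<Rightarrow> ('a \<Rightarrow> 'a) \<Rightarrow> bool" where
  "measure_preserving M \<theta> \<longleftrightarrow> \<theta> \<in> measurable M M \<and> distr M M \<theta> = M"

definition birk_sum :: "('a \<Rightarrow> 'a) \<Rightarrow> ('a \<Rightarrow> real) \<Rightarrow> nat \<Rightarrow> 'a \<Rightarrow> real" where
  "birk_sum \<theta> \<phi> n x = (\<Sum>k<n. \<phi> ((\<theta> ^^ k) x))"

definition lap_number :: "('a \<Rightarrow> 'a) \<Rightarrow> ('a \<Rightarrow> real) \<Rightarrow> real \<Rightarrow> 'a \<Rightarrow> nat" where
  "lap_number \<theta> \<phi> t x = (LEAST n. birk_sum \<theta> \<phi> n x > t)"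

definition flow_space :: "'a measure \<Rightarrow> ('a \<Rightarrow> real) \<Rightarrow> ('a \<times> real) set" where
  "flow_space M \<phi> = {(x, s). x \<in> space M \<and> 0 \<le> s \<and> s < \<phi> x}"

definition flow_measure :: "'a measure \<Rightarrow> ('a \<Rightarrow> real) \<Rightarrow> ('a \<times> real) measure" where
  "flow_measure M \<phi> = restrict_space (M \<Otimes>\<^sub>M lborel) (flow_space M \<phi>)"

definition special_flow :: "('a \<Rightarrow> 'a) \<Rightarrow> ('a \<Rightarrow> real) \<Rightarrow> real \<Rightarrow> 'a \<times> real \<Rightarrow> 'a \<times> real" where
  "special_flow \<theta> \<phi> t z = (case z of (x, s) \<Rightarrow>
     (if t < \<phi> x - s then (x, s + t)
      else (let N = lap_number \<theta> \<phi> (s + t) x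
            in ((\<theta> ^^ (N - 1)) x, s + t - birk_sum \<theta> \<phi> (N - 1) x))))"

definition ceiling_function :: "'a measure \<Rightarrow> ('a \<Rightarrow> real) \<Rightarrow> bool" where
  "ceiling_function M \<phi> \<longleftrightarrow> \<phi> \<in> borel_measurable M \<and> (\<exists>c>0. \<forall>x\<in>space M. c \<le> \<phi> x)"

definition is_hole :: "'a measure \<Rightarrow> ('a \<Rightarrow> 'a) \<Rightarrow> ('a \<Rightarrow> real) \<Rightarrow> ('a \<times> real) set \<Rightarrow> bool" where
  "is_hole M \<theta> \<phi> A \<longleftrightarrow>
     A \<in> sets (flow_measure M \<phi>) \<and>
     (AE z in flow_measure M \<phi>. \<exists>t\<ge>0. special_flow \<theta> \<phi> t z \<in> A) \<and>
     (\<forall>\<tau>\<ge>0. {z \<in> flow_space M \<phi>. \<exists>t\<in>{0..\<tau>}. special_flow \<theta> \<phi> t z \<in> A}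
              \<in> sets (flow_measure M \<phi>))"

definition survivors :: "'a measure \<Rightarrow> ('a \<Rightarrow> 'a) \<Rightarrow> ('a \<Rightarrow> real) \<Rightarrow> ('a \<times> real) set \<Rightarrow> real \<Rightarrow> ('a \<times> real) set" where
  "survivors M \<theta> \<phi> A t = {z \<in> flow_space M \<phi>. \<forall>\<tau>\<in>{0..t}. special_flow \<theta> \<phi> \<tau> z \<notin> A}"

definition eln :: "ennreal \<Rightarrow> ereal" where
  "eln x = (if x = 0 then -\<infinity> else if x = \<infinity> then \<infinity> else ereal (ln (enn2real x)))"

definition escape_quot :: "'a measure \<Rightarrow> ('a \<Rightarrow> 'a) \<Rightarrow> ('a \<Rightarrow> real) \<Rightarrow> ('a \<times> real) set \<Rightarrow> real \<Rightarrow> ereal" where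
  "escape_quot M \<theta> \<phi> A t =
     - (eln (emeasure (flow_measure M \<phi>) (survivors M \<theta> \<phi> A t))) / ereal t"

end

theory Submission
  imports Defs "HOL-Real_Asymp.Real_Asymp"
begin

text \<open>Survivor sets shrink as time grows, so the numerator \<open>L t = -log \<mu>(survivors t)\<close> of the
  escape quotient is monotone in \<open>t\<close>. Any \<open>t\<close> lies in a window \<open>[n\<lambda>, (n+1)\<lambda>)\<close>, hence
  \<open>L(n\<lambda>)/t \<le> L t/t \<le> L((n+1)\<lambda>)/t\<close>, and both bounds are the sampled quotients rescaled by
  factors \<open>n\<lambda>/t\<close>, \<open>(n+1)\<lambda>/t\<close> that tend to 1. The limit along the arithmetic progression
  therefore extends to the whole half-line.\<close>

lemma nat_floor_divide_bounds:
  fixes t lam :: real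
  assumes "lam > 0" and "t \<ge> 0"
  shows "real (nat \<lfloor>t / lam\<rfloor>) * lam \<le> t" and "t < real (Suc (nat \<lfloor>t / lam\<rfloor>)) * lam"
proof -
  have "real (nat \<lfloor>t / lam\<rfloor>) = of_int \<lfloor>t / lam\<rfloor>"
    using assms by simp
  then show "real (nat \<lfloor>t / lam\<rfloor>) * lam \<le> t" and "t < real (Suc (nat \<lfloor>t / lam\<rfloor>)) * lam"
    using floor_divide_lower[of lam t] floor_divide_upper[of lam t] assms(1)
    by (simp_all only: of_nat_Suc add.commute)
qed

lemma filterlim_nat_floor_divide_at_top:
  fixes lam :: real
  assumes "lam > 0"
  shows "filterlim (\<lambda>t. nat \<lfloor>t / lam\<rfloor>) sequentially at_top"
proof -
  have "filterlim (\<lambda>t. t / lam) at_top at_top"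
    using assms by real_asymp
  then show ?thesis
    by (intro filterlim_compose[OF filterlim_nat_sequentially]
              filterlim_compose[OF filterlim_floor_sequentially])
qed

lemma tendsto_nat_floor_divide_ratio:
  fixes lam :: real
  assumes "lam > 0"
  shows "((\<lambda>t. real (nat \<lfloor>t / lam\<rfloor>) * lam / t) \<longlongrightarrow> 1) at_top"
    and "((\<lambda>t. real (Suc (nat \<lfloor>t / lam\<rfloor>)) * lam / t) \<longlongrightarrow> 1) at_top"
proof -
  define n where "n t = nat \<lfloor>t / lam\<rfloor>" for t
  have lower: "(t - lam) / t \<le> real (n t) * lam / t"
   and upper: "real (n t) * lam / t \<le> 1" if "t > 0" for t
  proof -
    have "t - lam \<le> real (n t) * lam" and "real (n t) * lam \<le> t"
      using nat_floor_divide_bounds[OF assms less_imp_le[OF that], folded n_def]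
      by (simp_all add: algebra_simps)
    then show "(t - lam) / t \<le> real (n t) * lam / t" and "real (n t) * lam / t \<le> 1"
      using that by (simp_all add: divide_right_mono)
  qed
  have lo: "((\<lambda>t. real (n t) * lam / t) \<longlongrightarrow> 1) at_top"
  proof (rule tendsto_sandwich[OF _ _ _ tendsto_const])
    show "((\<lambda>t. (t - lam) / t) \<longlongrightarrow> 1) at_top"
      by real_asymp
  qed (use lower upper in \<open>blast intro: eventually_mono[OF eventually_gt_at_top[of 0]]\<close>)+
  then show "((\<lambda>t. real (nat \<lfloor>t / lam\<rfloor>) * lam / t) \<longlongrightarrow> 1) at_top"
    by (simp only: n_def)
  have "((\<lambda>t. real (n t) * lam / t + lam / t) \<longlongrightarrow> 1 + 0) at_top"
    by (intro tendsto_add lo) real_asymp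
  then show "((\<lambda>t. real (Suc (nat \<lfloor>t / lam\<rfloor>)) * lam / t) \<longlongrightarrow> 1) at_top"
    by (simp add: n_def add_divide_distrib distrib_right add.commute)
qed

lemma ereal_divide_rescale:
  fixes x :: ereal and a t :: real
  assumes "a > 0" and "t > 0"
  shows "x / ereal a * ereal (a / t) = x / ereal t"
  using assms by (simp add: divide_ereal_def mult.assoc inverse_eq_divide)

lemma tendsto_at_top_ratio_of_mono_sampled:
  fixes L :: "real \<Rightarrow> ereal" and lam :: real and \<alpha> :: ereal
  assumes mono: "\<And>s t. 0 \<le> s \<Longrightarrow> s \<le> t \<Longrightarrow> L s \<le> L t"
    and lam: "lam > 0"
    and sampled: "(\<lambda>n. L (real n * lam) / ereal (real n * lam)) \<longlonglongrightarrow> \<alpha>"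
  shows "((\<lambda>t. L t / ereal t) \<longlongrightarrow> \<alpha>) at_top"
proof -
  define n where "n t = nat \<lfloor>t / lam\<rfloor>" for t
  define q where "q k = L (real k * lam) / ereal (real k * lam)" for k
  have n: "filterlim n sequentially at_top"
    unfolding n_def using lam by (rule filterlim_nat_floor_divide_at_top)
  have lower: "((\<lambda>t. q (n t) * ereal (real (n t) * lam / t)) \<longlongrightarrow> \<alpha> * ereal 1) at_top"
    using filterlim_compose[OF sampled n] tendsto_nat_floor_divide_ratio(1)[OF lam]
    by (intro tendsto_mult_ereal) (auto simp: q_def n_def)
  have upper: "((\<lambda>t. q (Suc (n t)) * ereal (real (Suc (n t)) * lam / t)) \<longlongrightarrow> \<alpha> * ereal 1) at_top"
    using filterlim_compose[OF sampled[THEN LIMSEQ_Suc] n] tendsto_nat_floor_divide_ratio(2)[OF lam]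
    by (intro tendsto_mult_ereal) (auto simp: q_def n_def)
  have bounds: "\<forall>\<^sub>F t in at_top. q (n t) * ereal (real (n t) * lam / t) \<le> L t / ereal t
       \<and> L t / ereal t \<le> q (Suc (n t)) * ereal (real (Suc (n t)) * lam / t)"
  proof (rule eventually_mono[OF eventually_ge_at_top[of lam]])
    fix t assume "lam \<le> t"
    then have t: "t > 0" and "n t \<ge> 1"
      using lam by (auto simp: n_def le_nat_iff le_divide_eq_1_pos)
    then have pos: "real (n t) * lam > 0" "real (Suc (n t)) * lam > 0"
      using lam by auto
    have "L (real (n t) * lam) \<le> L t" and "L t \<le> L (real (Suc (n t)) * lam)"
      using nat_floor_divide_bounds[OF lam less_imp_le[OF t], folded n_def] pos
      by (auto intro: mono)
    then show "q (n t) * ereal (real (n t) * lam / t) \<le> L t / ereal t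
       \<and> L t / ereal t \<le> q (Suc (n t)) * ereal (real (Suc (n t)) * lam / t)"
      unfolding q_def ereal_divide_rescale[OF pos(1) t] ereal_divide_rescale[OF pos(2) t]
      using t by (auto intro: ereal_divide_right_mono)
  qed
  show ?thesis
    using tendsto_sandwich[OF eventually_mono[OF bounds conjunct1]
                              eventually_mono[OF bounds conjunct2] lower upper]
    by simp
qed

lemma space_flow_measure: "space (flow_measure M \<phi>) = flow_space M \<phi>"
  by (auto simp: flow_measure_def space_restrict_space space_pair_measure flow_space_def)

lemma survivors_antimono: "s \<le> t \<Longrightarrow> survivors M \<theta> \<phi> A t \<subseteq> survivors M \<theta> \<phi> A s"
  unfolding survivors_def by fastforce

lemma sets_survivors:
  assumes "is_hole M \<theta> \<phi> A" and "0 \<le> t"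
  shows "survivors M \<theta> \<phi> A t \<in> sets (flow_measure M \<phi>)"
proof -
  have "survivors M \<theta> \<phi> A t = space (flow_measure M \<phi>)
          - {z \<in> flow_space M \<phi>. \<exists>s\<in>{0..t}. special_flow \<theta> \<phi> s z \<in> A}"
    unfolding survivors_def space_flow_measure by blast
  with assms show ?thesis
    unfolding is_hole_def by auto
qed

lemma eln_mono:
  assumes "x \<le> y"
  shows "eln x \<le> eln y"
proof (cases "x = 0 \<or> y = \<infinity>")
  case True
  then show ?thesis by (auto simp: eln_def)
next
  case False
  with assms have "0 < x" "x < \<infinity>" "0 < y" "y < \<infinity>"
    by (auto simp: top_unique less_top zero_less_iff_neq_zero)
  moreover have "enn2real x \<le> enn2real y"
    using assms \<open>y < \<infinity>\<close> by (simp add: enn2real_mono)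
  ultimately show ?thesis
    by (auto simp: eln_def enn2real_positive_iff)
qed

lemma escape_numerator_mono:
  assumes "is_hole M \<theta> \<phi> A" and "0 \<le> s" and "s \<le> t"
  shows "- eln (emeasure (flow_measure M \<phi>) (survivors M \<theta> \<phi> A s))
           \<le> - eln (emeasure (flow_measure M \<phi>) (survivors M \<theta> \<phi> A t))"
  using emeasure_mono[OF survivors_antimono[OF assms(3)] sets_survivors[OF assms(1,2)]]
  by (simp add: eln_mono)

theorem lemma3p8:
  fixes M :: "'a measure" and \<theta> :: "'a \<Rightarrow> 'a" and \<phi> :: "'a \<Rightarrow> real"
    and A :: "('a \<times> real) set" and lam :: real and \<alpha> :: ereal
  assumes "prob_space M"
    and "measure_preserving M \<theta>"
    and "ceiling_function M \<phi>"
    and "is_hole M \<theta> \<phi> A"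
    and "lam > 0"
    and "(\<lambda>n. escape_quot M \<theta> \<phi> A (real n * lam)) \<longlonglongrightarrow> \<alpha>"
  shows "(\<forall>tk :: nat \<Rightarrow> real. (\<forall>k. tk k > 0) \<longrightarrow> filterlim tk at_top sequentially \<longrightarrow>
            (\<lambda>k. escape_quot M \<theta> \<phi> A (tk k)) \<longlonglongrightarrow> \<alpha>)
         \<and> ((\<lambda>t. escape_quot M \<theta> \<phi> A t) \<longlongrightarrow> \<alpha>) at_top"
proof -
  have at_top: "((\<lambda>t. escape_quot M \<theta> \<phi> A t) \<longlongrightarrow> \<alpha>) at_top"
    using tendsto_at_top_ratio_of_mono_sampled[OF escape_numerator_mono[OF assms(4)] assms(5)]
      assms(6)
    unfolding escape_quot_def by simp
  then show ?thesis
    by (auto intro: filterlim_compose)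
qed

end
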